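(* Let $\mathcal{M}=(x,p)$ be any mechanism. Suppose that for every agent $k$ we have coefficients $W^k_{i,j}\in[-1,1]$ ($i,j\in[m_k]$) and $\varepsilon'\ge\varepsilon''\ge0$ such that $W^k_{i,i}\ge\max\{W^k_{i,j}-\varepsilon',-\varepsilon''\}$ for all $k,i,j$. For each $k$ let $\hat q^*$ be an optimal solution of $(P^4)$ (built from $W^k$) and $(\hat\lambda^*,\hat\mu^*,\hat\pi^* )$ Lagrange multipliers satisfying its KKT conditions, and let $\lambda^*_{i,j}=\hat\lambda^*_{i,j}$ if $W^k_{i,j}\ge-m(\varepsilon'+2\gamma)-\varepsilon''$ and $\lambda^*_{i,j}=\hat\lambda^*_{i,j}+F_i(W^k_{i,j}+m(\varepsilon'+2\gamma)+\varepsilon'')$ otherwise (so that $(\lambda^*,\hat\mu^*,\hat\pi^* )$ satisfies the KKT conditions of $(P^3)$ at $\hat q^*$). Let $\mathcal{M}'$ be the RRSF mechanism with $q^*=\hat q^*$ and multipliers $(\lambda^*,\mu^*=\hat\mu^*,\pi^*=\hat\pi^* )$ for every agent. Then for every agent $k$ and $i\in[m_k]$, $$\hat p_k(t_k^{(i)})=\sum_j\pi^*_jq^*_{i,j}+\phi(\mathbf{q}^*_i)-\phi(\mathbf{0})+\min_\ell\frac{\mu^*_\ell}{F_\ell}\ge-m(\varepsilon'+2\gamma)-\varepsilon''-\gamma,$$ and consequently $\mathrm{Rev}(\mathcal{M}')\ge\mathrm{Rev}(\mathcal{M})-n\big(m(\varepsilon'+2\gamma)+\varepsilon''+\gamma\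big)$.
   Context: Setting: $n$ agents, general outcome set $\mathcal{O}$; agent $k$'s type is drawn independently from $\mathcal{D}_k$ with support $\{t_k^{(1)},\dots,t_k^{(m_k)}\}$ and probabilities $F_i=F_i^k>0$; $m=\max_km_k$; valuations in $[0,1]$. A mechanism $(x,p)$ maps bid profiles to outcome distributions and payments; $\mathrm{Rev}$ is expected total payment when agents report truthfully with $t\sim\mathcal{D}$. With $\gamma>0$, $\phi(\mathbf{q})=\frac12\gamma\|\mathbf{q}\|_2^2$; for agent $k$ (index suppressed): $(P^3)$ maximizes $\sum_iF_i(\sum_jW_{i,j}q_{i,j}-\phi(\mathbf{q}_i))$ s.t. $\sum_jq_{i,j}=1$, $\sum_iF_iq_{i,j}=F_j$, $q_{i,j}\ge0$; $(P^4)$ is the same with $W_{i,j}$ replaced by $\hat W_{i,j}=\max\{W_{i,j},-m(\varepsilon'+2\gamma)-\varepsilon''\}$. KKT conditions for coefficients $V$ at $q$ with multipliers $(\lambda,\mu,\pi)$: $F_i(V_{i,j}-\partial\phi(\mathbf{q}_i)/\partial q_{i,j})=\lambda_{i,j}+\mu_i+F_i\pi_j$, $\lambda_{i,j}\le0$, $\lambda_{i,j}q_{i,j}=0$. RRSF mechanism with parameters $(q^*,\mu^*,\pi^* )$ per agent: agent $k$ reporting $t_k^{(i)}$ is represented by a surrogate $s_k$ with $\Pr[s_k=t_k^{(j)}]=q^*_{i,j}$; $\mathcal{M}$ is run on $s=(s_1,\dots,s_n)$, the outcome is $o\sim x(s)$, and agent $k$ pays $p_k(s)+\hat p_k(t_k^{(i)})$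 with $\hat p_k$ as displayed in the claim. *)

theory Defs
  imports Complex_Main "HOL-Library.FuncSet"
begin

text \<open>Agents are 0..<n; agent k's types are indexed by 0..<mk k
  (index i stands for t_k^(i)); F k i is the probability of t_k^(i).
  A bid/type profile is a function b :: nat => nat with b k < mk k.\<close>

definition profiles :: "nat \<Rightarrow> (nat \<Rightarrow> nat) \<Rightarrow> (nat \<Rightarrow> nat) set" where
  "profiles n mk = PiE {..<n} (\<lambda>k. {..<mk k})"

text \<open>Expected total payment under truthful reporting, t ~ D (product distribution).
  pay b k is the (expected) payment of agent k at bid profile b.\<close>
definition Rev :: "nat \<Rightarrow> (nat \<Rightarrow> nat) \<Rightarrow> (nat \<Rightarrow> nat \<Rightarrow> real)
                    \<Rightarrow> ((nat \<Rightarrow> nat) \<Rightarrow> nat \<Rightarrow> real) \<Rightarrow> real" where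
  "Rev n mk F pay = (\<Sum>t\<in>profiles n mk. (\<Prod>k<n. F k (t k)) * (\<Sum>k<n. pay t k))"

definition phi :: "real \<Rightarrow> nat \<Rightarrow> (nat \<Rightarrow> real) \<Rightarrow> real" where
  "phi \<gamma> mk v = \<gamma> / 2 * (\<Sum>j<mk. (v j)\<^sup>2)"

definition What :: "nat \<Rightarrow> real \<Rightarrow> real \<Rightarrow> real \<Rightarrow> real \<Rightarrow> real" where
  "What m e1 e2 \<gamma> w = max w (- (real m * (e1 + 2 * \<gamma>)) - e2)"

definition feasible :: "nat \<Rightarrow> (nat \<Rightarrow> real) \<Rightarrow> (nat \<Rightarrow> nat \<Rightarrow> real) \<Rightarrow> bool" where
  "feasible mk F q \<longleftrightarrow>
     (\<forall>i<mk. (\<Sum>j<mk. q i j) = 1) \<and>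
     (\<forall>j<mk. (\<Sum>i<mk. F i * q i j) = F j) \<and>
     (\<forall>i<mk. \<forall>j<mk. 0 \<le> q i j)"

definition objective :: "nat \<Rightarrow> (nat \<Rightarrow> real) \<Rightarrow> real \<Rightarrow> (nat \<Rightarrow> nat \<Rightarrow> real)
                          \<Rightarrow> (nat \<Rightarrow> nat \<Rightarrow> real) \<Rightarrow> real" where
  "objective mk F \<gamma> V q = (\<Sum>i<mk. F i * ((\<Sum>j<mk. V i j * q i j) - phi \<gamma> mk (q i)))"

text \<open>q is an optimal solution of the program with coefficients V
  ((P^3) for V = W, (P^4) for V = What ... o W).\<close>
definition optimal :: "nat \<Rightarrow> (nat \<Rightarrow> real) \<Rightarrow> real \<Rightarrow> (nat \<Rightarrow> nat \<Rightarrow> real)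
                        \<Rightarrow> (nat \<Rightarrow> nat \<Rightarrow> real) \<Rightarrow> bool" where
  "optimal mk F \<gamma> V q \<longleftrightarrow> feasible mk F q \<and>
     (\<forall>q'. feasible mk F q' \<longrightarrow> objective mk F \<gamma> V q' \<le> objective mk F \<gamma> V q)"

text \<open>KKT conditions for coefficients V at q with multipliers (lam, mu, piv);
  d phi(q_i) / d q_ij = gamma * q_ij.\<close>
definition KKT :: "nat \<Rightarrow> (nat \<Rightarrow> real) \<Rightarrow> real \<Rightarrow> (nat \<Rightarrow> nat \<Rightarrow> real)
                    \<Rightarrow> (nat \<Rightarrow> nat \<Rightarrow> real) \<Rightarrow> (nat \<Rightarrow> nat \<Rightarrow> real)
                    \<Rightarrow> (nat \<Rightarrow> real) \<Rightarrow> (nat \<Rightarrow> real) \<Rightarrow> bool" where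
  "KKT mk F \<gamma> V q lam mu piv \<longleftrightarrow>
     (\<forall>i<mk. \<forall>j<mk.
        F i * (V i j - \<gamma> * q i j) = lam i j + mu i + F i * piv j \<and>
        lam i j \<le> 0 \<and> lam i j * q i j = 0)"

text \<open>Multipliers lambda* for (P^3) obtained from those of (P^4)
  (part of the RRSF parameters; the payments do not depend on them).\<close>
definition lambda_star :: "nat \<Rightarrow> real \<Rightarrow> real \<Rightarrow> real \<Rightarrow> (nat \<Rightarrow> real)
     \<Rightarrow> (nat \<Rightarrow> nat \<Rightarrow> real) \<Rightarrow> (nat \<Rightarrow> nat \<Rightarrow> real) \<Rightarrow> nat \<Rightarrow> nat \<Rightarrow> real" where
  "lambda_star m e1 e2 \<gamma> F W lamh i j =
     (if W i j \<ge> - (real m * (e1 + 2 * \<gamma>)) - e2 then lamh i j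
      else lamh i j + F i * (W i j + real m * (e1 + 2 * \<gamma>) + e2))"

definition phat :: "nat \<Rightarrow> (nat \<Rightarrow> real) \<Rightarrow> real \<Rightarrow> (nat \<Rightarrow> nat \<Rightarrow> real)
                     \<Rightarrow> (nat \<Rightarrow> real) \<Rightarrow> (nat \<Rightarrow> real) \<Rightarrow> nat \<Rightarrow> real" where
  "phat mk F \<gamma> q mu piv i =
     (\<Sum>j<mk. piv j * q i j) + phi \<gamma> mk (q i) - phi \<gamma> mk (\<lambda>_. 0)
     + Min ((\<lambda>l. mu l / F l) ` {..<mk})"

text \<open>Expected payment of agent k in the RRSF mechanism at bid profile b:
  surrogates s_l drawn independently with Pr[s_l = j] = q l (b l) j, M run on s,
  plus the additional payment ph k (b k).\<close>
definition rrsf_pay :: "nat \<Rightarrow> (nat \<Rightarrow> nat) \<Rightarrow> (nat \<Rightarrow> nat \<Rightarrow> nat \<Rightarrow> real)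
     \<Rightarrow> ((nat \<Rightarrow> nat) \<Rightarrow> nat \<Rightarrow> real) \<Rightarrow> (nat \<Rightarrow> nat \<Rightarrow> real)
     \<Rightarrow> (nat \<Rightarrow> nat) \<Rightarrow> nat \<Rightarrow> real" where
  "rrsf_pay n mk q p ph b k =
     (\<Sum>s\<in>profiles n mk. (\<Prod>l<n. q l (b l) (s l)) * p s k) + ph k (b k)"

end

theory Submission
  imports Defs
begin

text \<open>The KKT equation for a row l reads
  mu l / F l = V l j - \<gamma> q l j - piv j - lam l j / F l \<ge> L - \<gamma> - piv j
  whenever every coefficient V is at least L; in (P^4) the truncation gives
  L = -m(e1 + 2\<gamma>) - e2. Averaging this over j with the weights q i j, and using
  phi \<ge> 0 = phi 0, bounds the extra payment phat from below by L - \<gamma>.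
  For the revenue, the surrogate distribution preserves the prior
  (\<Sum>i F i q i j = F j), so the surrogate part of the RRSF payments has the same
  expectation as the payments of the original mechanism, and only the extra
  payments, each at least L - \<gamma>, change the revenue. Only the truncation bound on the
  coefficients of (P^4) is used.\<close>

lemma feasible_le_one:
  assumes "feasible mk F q" and "i < mk" and "j < mk"
  shows "q i j \<le> 1"
proof -
  have "q i j \<le> (\<Sum>j'<mk. q i j')"
    by (rule member_le_sum) (use assms in \<open>auto simp: feasible_def\<close>)
  also have "\<dots> = 1"
    using assms by (auto simp: feasible_def)
  finally show ?thesis .
qed

lemma KKT_multiplier_lower_bound:
  assumes "KKT mk F \<gamma> V q lam mu piv" and "feasible mk F q"
    and "0 \<le> \<gamma>" and "0 < F l" and "l < mk" and "j < mk"
  shows "V l j - \<gamma> - piv j \<le> mu l / F l"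
proof -
  have "F l * (V l j - \<gamma> * q l j) = lam l j + mu l + F l * piv j"
    and "lam l j \<le> 0"
    using assms(1,5,6) by (auto simp: KKT_def)
  then have "F l * (V l j - \<gamma> * q l j - piv j) \<le> mu l"
    by (simp add: algebra_simps)
  then have "V l j - \<gamma> * q l j - piv j \<le> mu l / F l"
    using \<open>0 < F l\<close> by (simp add: field_simps)
  moreover have "\<gamma> * q l j \<le> \<gamma>"
    using feasible_le_one[OF assms(2,5,6)] \<open>0 \<le> \<gamma>\<close> by (simp add: mult_left_le)
  ultimately show ?thesis
    by linarith
qed

lemma phat_lower_bound:
  assumes "feasible mk F q" and "KKT mk F \<gamma> V q lam mu piv"
    and "\<forall>i<mk. 0 < F i" and "\<forall>i<mk. \<forall>j<mk. L \<le> V i j"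
    and "0 \<le> \<gamma>" and "i < mk"
  shows "L - \<gamma> \<le> phat mk F \<gamma> q mu piv i"
proof -
  obtain l where "l < mk" and min_eq: "Min ((\<lambda>l. mu l / F l) ` {..<mk}) = mu l / F l"
    using Min_in[of "(\<lambda>l. mu l / F l) ` {..<mk}"] \<open>i < mk\<close> by fastforce
  have row_bound: "L - \<gamma> - piv j \<le> mu l / F l" if "j < mk" for j
    using KKT_multiplier_lower_bound[OF assms(2,1,5) _ \<open>l < mk\<close> that] assms(3,4) \<open>l < mk\<close> that
    by fastforce
  have q_nonneg: "\<forall>j<mk. 0 \<le> q i j" and q_sum: "(\<Sum>j<mk. q i j) = 1"
    using assms(1,6) by (auto simp: feasible_def)
  have "(L - \<gamma>) - (\<Sum>j<mk. piv j * q i j) = (\<Sum>j<mk. q i j * (L - \<gamma> - piv j))"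
    using q_sum by (simp add: right_diff_distrib sum_subtractf mult.commute sum_distrib_left[symmetric])
  also have "\<dots> \<le> (\<Sum>j<mk. q i j * (mu l / F l))"
    by (rule sum_mono, rule mult_left_mono) (use row_bound q_nonneg in auto)
  also have "\<dots> = mu l / F l"
    using q_sum by (simp add: sum_distrib_right[symmetric] del: times_divide_eq_right)
  finally have "(L - \<gamma>) - (\<Sum>j<mk. piv j * q i j) \<le> mu l / F l" .
  moreover have "0 \<le> phi \<gamma> mk (q i)"
    using \<open>0 \<le> \<gamma>\<close> unfolding phi_def by (auto intro!: mult_nonneg_nonneg sum_nonneg)
  moreover have "phi \<gamma> mk (\<lambda>_. 0) = 0"
    by (simp add: phi_def)
  ultimately show ?thesis
    unfolding phat_def min_eq by linarith
qed

lemma sum_profiles_prod: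
  fixes f :: "nat \<Rightarrow> nat \<Rightarrow> 'a :: comm_semiring_1"
  shows "(\<Sum>t\<in>profiles n mk. \<Prod>k<n. f k (t k)) = (\<Prod>k<n. \<Sum>i<mk k. f k i)"
  unfolding profiles_def by (rule prod_sum_PiE[symmetric]) auto

lemma sum_profiles_prob_eq_one:
  fixes F :: "nat \<Rightarrow> nat \<Rightarrow> 'a :: comm_semiring_1"
  assumes "\<forall>k<n. (\<Sum>i<mk k. F k i) = 1"
  shows "(\<Sum>t\<in>profiles n mk. \<Prod>k<n. F k (t k)) = 1"
  using assms by (subst sum_profiles_prod) simp

lemma surrogate_preserves_prior:
  fixes F :: "nat \<Rightarrow> nat \<Rightarrow> 'a :: comm_semiring_1"
  assumes "\<forall>k<n. \<forall>j<mk k. (\<Sum>i<mk k. F k i * q k i j) = F k j"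
    and "s \<in> profiles n mk"
  shows "(\<Sum>t\<in>profiles n mk. (\<Prod>k<n. F k (t k)) * (\<Prod>k<n. q k (t k) (s k)))
           = (\<Prod>k<n. F k (s k))"
proof -
  have "(\<Sum>t\<in>profiles n mk. (\<Prod>k<n. F k (t k)) * (\<Prod>k<n. q k (t k) (s k)))
      = (\<Prod>k<n. \<Sum>i<mk k. F k i * q k i (s k))"
    by (simp add: prod.distrib[symmetric] sum_profiles_prod[of "\<lambda>k i. F k i * q k i (s k)"])
  also have "\<dots> = (\<Prod>k<n. F k (s k))"
    using assms by (intro prod.cong) (auto simp: profiles_def)
  finally show ?thesis .
qed

lemma Rev_rrsf_pay:
  assumes "\<forall>k<n. \<forall>j<mk k. (\<Sum>i<mk k. F k i * q k i j) = F k j"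
  shows "Rev n mk F (rrsf_pay n mk q p ph)
           = Rev n mk F p + (\<Sum>t\<in>profiles n mk. (\<Prod>k<n. F k (t k)) * (\<Sum>k<n. ph k (t k)))"
proof -
  let ?T = "profiles n mk"
  let ?P = "\<lambda>t. \<Prod>k<n. F k (t k)" and ?Q = "\<lambda>t s. \<Prod>k<n. q k (t k) (s k)"
  have "(\<Sum>t\<in>?T. ?P t * (\<Sum>k<n. \<Sum>s\<in>?T. ?Q t s * p s k))
      = (\<Sum>t\<in>?T. \<Sum>s\<in>?T. ?P t * ?Q t s * (\<Sum>k<n. p s k))"
    by (simp add: sum.swap[of _ "{..<n}"] sum_distrib_left mult.assoc)
  also have "\<dots> = (\<Sum>s\<in>?T. \<Sum>t\<in>?T. ?P t * ?Q t s * (\<Sum>k<n. p s k))"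
    by (rule sum.swap)
  also have "\<dots> = (\<Sum>s\<in>?T. (\<Sum>t\<in>?T. ?P t * ?Q t s) * (\<Sum>k<n. p s k))"
    by (simp add: sum_distrib_right)
  also have "\<dots> = Rev n mk F p"
    unfolding Rev_def using surrogate_preserves_prior[OF assms] by simp
  finally show ?thesis
    unfolding Rev_def[of _ _ _ "rrsf_pay n mk q p ph"] rrsf_pay_def
    by (simp add: sum.distrib distrib_left)
qed

lemma Rev_rrsf_pay_lower_bound:
  assumes "\<forall>k<n. \<forall>j<mk k. (\<Sum>i<mk k. F k i * q k i j) = F k j"
    and "\<forall>k<n. \<forall>i<mk k. 0 \<le> F k i" and "\<forall>k<n. (\<Sum>i<mk k. F k i) = 1"
    and "\<forall>k<n. \<forall>i<mk k. - c \<le> ph k i"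
  shows "Rev n mk F p - real n * c \<le> Rev n mk F (rrsf_pay n mk q p ph)"
proof -
  let ?T = "profiles n mk" and ?P = "\<lambda>t. \<Prod>k<n. F k (t k)"
  have "- (real n * c) = (\<Sum>t\<in>?T. ?P t * (\<Sum>k<n. - c))"
    using sum_profiles_prob_eq_one[OF assms(3)]
    by (simp add: sum_negf sum_distrib_right[symmetric])
  also have "\<dots> \<le> (\<Sum>t\<in>?T. ?P t * (\<Sum>k<n. ph k (t k)))"
    using assms(2,4)
    by (intro sum_mono mult_left_mono prod_nonneg) (auto simp: profiles_def PiE_iff)
  finally show ?thesis
    using Rev_rrsf_pay[OF assms(1)] by simp
qed

theorem mainTheorem13:
  fixes n :: nat and mk :: "nat \<Rightarrow> nat" and m :: nat
    and F :: "nat \<Rightarrow> nat \<Rightarrow> real"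
    and p :: "(nat \<Rightarrow> nat) \<Rightarrow> nat \<Rightarrow> real"
    and W :: "nat \<Rightarrow> nat \<Rightarrow> nat \<Rightarrow> real"
    and e1 e2 \<gamma> :: real
    and qh lamh :: "nat \<Rightarrow> nat \<Rightarrow> nat \<Rightarrow> real"
    and muh pih :: "nat \<Rightarrow> nat \<Rightarrow> real"
  assumes m_def: "m = Max (mk ` {..<n})"
    and F_pos: "\<forall>k<n. \<forall>i<mk k. 0 < F k i"
    and F_sum: "\<forall>k<n. (\<Sum>i<mk k. F k i) = 1"
    and gamma_pos: "0 < \<gamma>"
    and eps: "e1 \<ge> e2" "e2 \<ge> 0"
    and W_range: "\<forall>k<n. \<forall>i<mk k. \<forall>j<mk k. -1 \<le> W k i j \<and> W k i j \<le> 1"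
    and W_diag: "\<forall>k<n. \<forall>i<mk k. \<forall>j<mk k. W k i i \<ge> max (W k i j - e1) (- e2)"
    and opt: "\<forall>k<n. optimal (mk k) (F k) \<gamma> (\<lambda>i j. What m e1 e2 \<gamma> (W k i j)) (qh k)"
    and kkt: "\<forall>k<n. KKT (mk k) (F k) \<gamma> (\<lambda>i j. What m e1 e2 \<gamma> (W k i j)) (qh k)
                      (lamh k) (muh k) (pih k)"
  shows "(\<forall>k<n. \<forall>i<mk k.
            phat (mk k) (F k) \<gamma> (qh k) (muh k) (pih k) i
              \<ge> - (real m * (e1 + 2 * \<gamma>)) - e2 - \<gamma>) \<and>
         Rev n mk F (rrsf_pay n mk qh p (\<lambda>k i. phat (mk k) (F k) \<gamma> (qh k) (muh k) (pih k) i))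
           \<ge> Rev n mk F p - real n * (real m * (e1 + 2 * \<gamma>) + e2 + \<gamma>)"
proof -
  let ?c = "real m * (e1 + 2 * \<gamma>) + e2 + \<gamma>"
  have feas: "feasible (mk k) (F k) (qh k)" if "k < n" for k
    using opt that by (auto simp: optimal_def)
  have "\<forall>k<n. \<forall>i<mk k. - ?c \<le> phat (mk k) (F k) \<gamma> (qh k) (muh k) (pih k) i"
    using phat_lower_bound[OF feas kkt[rule_format]] F_pos gamma_pos
    by (simp add: What_def)
  moreover have "\<forall>k<n. \<forall>j<mk k. (\<Sum>i<mk k. F k i * qh k i j) = F k j"
    using feas by (simp add: feasible_def)
  ultimately show ?thesis
    using Rev_rrsf_pay_lower_bound[of n mk F qh ?c] F_pos F_sum by (simp add: less_imp_le)
qed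

end
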